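(* For every $k\in\mathbb Z$, the series $\Psi^\pm_k:=R_\pm^k\Psi_0^\pm$ are given by \[ \Psi_k^+(x)=\gamma\sum_{j\ge0}x^{j+k}h_j(\beta^{-1}{\bf s})\rho_{j+k-1},\qquad \Psi_k^-(x)=\sum_{j\ge0}x^{j+k}h_j(-\beta^{-1}{\bf s})\rho^{-1}_{-j-k}. \]
   Context: Let $G(z)=1+\sum_{i\ge1}g_iz^i$ be a formal power series, $\beta,\gamma$ formal parameters, ${\bf s}=(s_1,s_2,\dots)$. $h_j({\bf s})$ are the complete symmetric functions in the variables $s_i$ via $\sum_jh_j({\bf s})z^j=\exp(\sum_is_iz^i)$, and $\pm\beta^{-1}{\bf s}=(\pm\beta^{-1}s_1,\pm\beta^{-1}s_2,\dots)$. With $r_\lambda=\prod_{(i,j)\in\lambda}G((j-i)\beta)$ (boxes $(i,j)$, $i$ = row, $j$ = column) and Schur functions written in ${\bf t}$ with $p_i=it_i$, let $\tau({\bf t})=\sum_\lambda\gamma^{|\lambda|}r_\lambda s_\lambda({\bf t})s_\lambda(\beta^{-1}{\bf s})$ and $\Psi_0^\pm(x)=\tau(\pm[x])$, $[x]=(x,x^2/2,\dots)$. Set $\rho_0=1$, $\rho_j=\gamma^j\prod_{i=1}^jG(i\beta)$ and $\rho_{-j}=\gamma^{-j}\prod_{i=0}^{j-1}G(-i\beta)^{-1}$ for $j\ge1$. $D=x\,d/dx$, and $R_\pm=\gamma xG(\pm\beta D)$ acts on formal Laurent series in $x$ (coefficients in $\mathbb Q[g_1,g_2,\dots][{\bf s}][\gamma,\gamma^{-1}]((\beta))$)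 by $R_\pm(x^j)=\gamma G(\pm\beta j)x^{j+1}$; it is invertible since each $G(\pm\beta j)$ is invertible, and $R_\pm^k$ for $k<0$ means the inverse power. *)

theory Defs
  imports "HOL-Computational_Algebra.Formal_Laurent_Series" "HOL-Combinatorics.Permutations"
begin

(* Complete symmetric functions: sum_j h_j(t) z^j = exp(sum_{i>=1} t_i z^i).
   Sequences t = (t_1, t_2, ...) are functions nat => 'b; the value at 0 is ignored. *)
definition hcs :: "(nat \<Rightarrow> 'b::field_char_0) \<Rightarrow> nat \<Rightarrow> 'b" where
  "hcs t j = (fps_exp 1 oo Abs_fps (\<lambda>i. if i = 0 then 0 else t i)) $ j"

definition is_partition :: "nat list \<Rightarrow> bool" where
  "is_partition lam \<longleftrightarrow> sorted_wrt (\<ge>) lam \<and> (\<forall>x\<in>set lam. 0 < x)"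

definition ldet :: "nat \<Rightarrow> (nat \<Rightarrow> nat \<Rightarrow> 'b::comm_ring_1) \<Rightarrow> 'b" where
  "ldet n M = (\<Sum>p | p permutes {..<n}. of_int (sign p) * (\<Prod>i<n. M i (p i)))"

definition hcs_int :: "(nat \<Rightarrow> 'b::field_char_0) \<Rightarrow> int \<Rightarrow> 'b" where
  "hcs_int t m = (if m < 0 then 0 else hcs t (nat m))"

(* Schur function via Jacobi--Trudi: s_lam(t) = det (h_{lam_i - i + j}(t)) *)
definition schur :: "nat list \<Rightarrow> (nat \<Rightarrow> 'b::field_char_0) \<Rightarrow> 'b" where
  "schur lam t = ldet (length lam)
     (\<lambda>i j. hcs_int t (int (lam ! i) - int i + int j))"

(* content product r_lam = prod over boxes (i,j) of G((j - i) beta) *)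
definition r_lam :: "('a::field_char_0 \<Rightarrow> 'a) \<Rightarrow> 'a \<Rightarrow> nat list \<Rightarrow> 'a" where
  "r_lam G beta lam = (\<Prod>i<length lam. \<Prod>j<lam ! i. G (of_int (int j - int i) * beta))"

(* formal (coefficientwise, finitely supported) sum of Laurent series over an index set *)
definition fls_formal_sum :: "('i \<Rightarrow> 'a::comm_monoid_add fls) \<Rightarrow> 'i set \<Rightarrow> 'a fls" where
  "fls_formal_sum F A = Abs_fls (\<lambda>n. \<Sum>i\<in>{i\<in>A. fls_nth (F i) n \<noteq> 0}. fls_nth (F i) n)"

(* the Miwa point sigma*[x] = (sigma x, sigma x^2/2, ...) as Laurent series in x *)
definition miwa :: "'a::field_char_0 \<Rightarrow> nat \<Rightarrow> 'a fls" where
  "miwa sigma i = fls_const sigma * fls_X ^ i / of_nat i"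

(* Psi_0^{sigma}(x) = tau(sigma [x]),
   tau(t) = sum_lam gamma^|lam| r_lam s_lam(t) s_lam(beta^{-1} s) *)
definition Psi0 :: "('a::field_char_0 \<Rightarrow> 'a) \<Rightarrow> 'a \<Rightarrow> 'a \<Rightarrow> (nat \<Rightarrow> 'a) \<Rightarrow> 'a \<Rightarrow> 'a fls" where
  "Psi0 G beta gamma s sigma = fls_formal_sum
     (\<lambda>lam. fls_const (gamma ^ sum_list lam * r_lam G beta lam * schur lam (\<lambda>i. s i / beta))
            * schur lam (miwa sigma))
     {lam. is_partition lam}"

(* R_sigma = gamma x G(sigma beta D):  R(x^j) = gamma G(sigma beta j) x^(j+1) *)
definition Rop :: "('a::field_char_0 \<Rightarrow> 'a) \<Rightarrow> 'a \<Rightarrow> 'a \<Rightarrow> 'a \<Rightarrow> 'a fls \<Rightarrow> 'a fls" where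
  "Rop G beta gamma sigma f =
     Abs_fls (\<lambda>n. gamma * G (sigma * beta * of_int (n - 1)) * fls_nth f (n - 1))"

definition Rinv :: "('a::field_char_0 \<Rightarrow> 'a) \<Rightarrow> 'a \<Rightarrow> 'a \<Rightarrow> 'a \<Rightarrow> 'a fls \<Rightarrow> 'a fls" where
  "Rinv G beta gamma sigma f =
     Abs_fls (\<lambda>n. fls_nth f (n + 1) / (gamma * G (sigma * beta * of_int n)))"

definition Rpow :: "('a::field_char_0 \<Rightarrow> 'a) \<Rightarrow> 'a \<Rightarrow> 'a \<Rightarrow> 'a \<Rightarrow> int \<Rightarrow> 'a fls \<Rightarrow> 'a fls" where
  "Rpow G beta gamma sigma k =
     (if 0 \<le> k then Rop G beta gamma sigma ^^ nat k else Rinv G beta gamma sigma ^^ nat (- k))"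

definition rho :: "('a::field_char_0 \<Rightarrow> 'a) \<Rightarrow> 'a \<Rightarrow> 'a \<Rightarrow> int \<Rightarrow> 'a" where
  "rho G beta gamma j =
     (if 0 \<le> j then gamma ^ nat j * (\<Prod>i=1..nat j. G (of_nat i * beta))
      else inverse (gamma ^ nat (- j)) * (\<Prod>i<nat (- j). inverse (G (- (of_nat i * beta)))))"

end

(* At the Miwa points [x] and -[x] the generating series exp(sum t_i z^i) of the complete
   symmetric functions become 1/(1 - xz) and 1 - xz, so h_j([x]) = x^j while h_j(-[x]) is 1, -x, 0
   for j = 0, 1, >= 2.  In the Jacobi-Trudi determinant this makes s_lam([x]) vanish unless lam is a
   single row (rows 0 and 1 are proportional) and s_lam(-[x]) vanish unless lam is a single column
   (its first row is zero), where it is (-x)^|lam|; the dual identity s_(1^n) = (-1)^n h_n(-t) handles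
   the remaining factor.  Hence tau(+-[x]) collapses to one term per power of x, with coefficient
   gamma^n r_lam h_n(+-s/beta) equal to gamma rho_(n-1) h_n(s/beta), resp. h_n(-s/beta)/rho_(-n).
   Finally R_+- multiplies the coefficient of x^j by gamma G(+-beta j) and moves it to x^(j+1),
   which by the recurrence rho_j = gamma G(j beta) rho_(j-1) turns the closed formula for k into
   the one for k + 1. *)

theory Submission
  imports Defs "Jordan_Normal_Form.Determinant"
begin

no_notation fps_nth (infixl \<open>$\<close> 75)

definition hcs_log :: "(nat \<Rightarrow> 'a::field_char_0) \<Rightarrow> 'a fps" where
  "hcs_log t = Abs_fps (\<lambda>i. if i = 0 then 0 else t i)"

definition hcs_fps :: "(nat \<Rightarrow> 'a::field_char_0) \<Rightarrow> 'a fps" where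
  "hcs_fps t = fps_exp 1 oo hcs_log t"

lemma hcs_eq_hcs_fps_nth: "hcs t n = fps_nth (hcs_fps t) n"
  by (simp add: hcs_def hcs_fps_def hcs_log_def)

lemma hcs_fps_nth_0 [simp]: "fps_nth (hcs_fps t) 0 = 1"
  by (simp add: hcs_fps_def hcs_log_def)

lemma hcs_0 [simp]: "hcs t 0 = 1"
  by (simp add: hcs_eq_hcs_fps_nth)

lemma fps_deriv_hcs_fps: "fps_deriv (hcs_fps t) = hcs_fps t * fps_deriv (hcs_log t)"
  by (simp add: hcs_fps_def hcs_log_def fps_compose_deriv)

lemma hcs_fps_mult_uminus: "hcs_fps t * hcs_fps (\<lambda>i. - t i) = 1"
proof -
  have "hcs_log (\<lambda>i. - t i) = - hcs_log t"
    by (simp add: hcs_log_def fps_eq_iff)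
  then have "fps_deriv (hcs_fps t * hcs_fps (\<lambda>i. - t i)) = 0"
    by (simp add: fps_deriv_hcs_fps algebra_simps)
  then have "hcs_fps t * hcs_fps (\<lambda>i. - t i) = fps_const (fps_nth (hcs_fps t * hcs_fps (\<lambda>i. - t i)) 0)"
    by (rule fps_deriv_eq_0_iff[THEN iffD1])
  then show ?thesis
    by simp
qed

lemma hcs_fps_Suc_nth:
  "of_nat (Suc n) * fps_nth (hcs_fps t) (Suc n) =
     (\<Sum>i=0..n. fps_nth (hcs_fps t) i * (of_nat (Suc (n - i)) * t (Suc (n - i))))"
proof -
  have "fps_nth (fps_deriv (hcs_fps t)) n = fps_nth (hcs_fps t * fps_deriv (hcs_log t)) n"
    by (simp only: fps_deriv_hcs_fps)
  then show ?thesis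
    by (simp add: fps_mult_nth hcs_log_def)
qed

lemma of_nat_mult_miwa: "0 < m \<Longrightarrow> of_nat m * miwa c m = fls_const c * fls_X ^ m"
  by (simp add: miwa_def)

lemma hcs_miwa_1: "hcs (miwa (1::'a::field_char_0)) n = fls_X ^ n"
  unfolding hcs_eq_hcs_fps_nth
proof (induction n rule: less_induct)
  case (less n)
  show ?case
  proof (cases n)
    case (Suc m)
    have "of_nat (Suc m) * fps_nth (hcs_fps (miwa (1::'a))) (Suc m) =
        (\<Sum>i=0..m. fps_nth (hcs_fps (miwa 1)) i * (of_nat (Suc (m - i)) * miwa 1 (Suc (m - i))))"
      by (rule hcs_fps_Suc_nth)
    also have "\<dots> = (\<Sum>i=0..m. fls_X ^ Suc m)"
    proof (rule sum.cong)
      fix i assume i: "i \<in> {0..m}"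
      then have exp: "i + Suc (m - i) = Suc m"
        by simp
      have IH: "fps_nth (hcs_fps (miwa (1::'a))) i = fls_X ^ i"
        using less[of i] Suc i by simp
      have miwa_term: "of_nat (Suc (m - i)) * miwa (1::'a) (Suc (m - i)) = fls_X ^ Suc (m - i)"
        using of_nat_mult_miwa[of "Suc (m - i)" 1] by simp
      show "fps_nth (hcs_fps (miwa (1::'a))) i * (of_nat (Suc (m - i)) * miwa 1 (Suc (m - i))) = fls_X ^ Suc m"
        by (simp only: IH miwa_term exp power_add[symmetric])
    qed simp
    also have "\<dots> = of_nat (Suc m) * fls_X ^ Suc m"
      by simp
    finally show ?thesis
      using Suc by (simp del: of_nat_Suc)
  qed simp
qed

lemma hcs_miwa_uminus_1:
  "hcs (miwa (-1::'a::field_char_0)) n = (if n = 0 then 1 else if n = 1 then - fls_X else 0)"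
proof -
  define E :: "'a fls fps" where "E = 1 - fps_const fls_X * fps_X"
  have "hcs_fps (miwa 1) * E = 1"
  proof (rule fps_ext)
    fix n
    show "fps_nth (hcs_fps (miwa 1) * E) n = fps_nth 1 n"
    proof (cases n)
      case (Suc m)
      then have "fps_nth (hcs_fps (miwa 1) * E) n =
          fps_nth (hcs_fps (miwa 1)) (Suc m) - fls_X * fps_nth (hcs_fps (miwa 1)) m"
        by (simp add: E_def algebra_simps)
      then show ?thesis
        using Suc by (simp add: hcs_miwa_1 flip: hcs_eq_hcs_fps_nth)
    qed (simp add: E_def)
  qed
  moreover have "miwa (-1::'a) = (\<lambda>i. - miwa 1 i)"
    by (simp add: miwa_def fun_eq_iff)
  ultimately have "hcs_fps (miwa (-1::'a)) = (hcs_fps (miwa 1) * hcs_fps (miwa (-1))) * E"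
    by (simp add: ac_simps)
  also have "\<dots> = E"
    by (simp add: \<open>miwa (-1) = (\<lambda>i. - miwa 1 i)\<close> hcs_fps_mult_uminus)
  finally have "hcs_fps (miwa (-1::'a)) = E" .
  then show ?thesis
    by (simp add: hcs_eq_hcs_fps_nth E_def)
qed

lemma schur_eq_det:
  "schur lam t =
     det (mat (length lam) (length lam) (\<lambda>(i, j). hcs_int t (int (lam ! i) - int i + int j)))"
  unfolding schur_def ldet_def det_def by (simp add: atLeast0LessThan)

lemma hcs_int_miwa_1: "hcs_int (miwa (1::'a::field_char_0)) m = (if m < 0 then 0 else fls_X ^ nat m)"
  by (simp add: hcs_int_def hcs_miwa_1)

lemma hcs_int_miwa_uminus_1:
  "hcs_int (miwa (-1::'a::field_char_0)) m = (if m = 0 then 1 else if m = 1 then - fls_X else 0)"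
  by (auto simp add: hcs_int_def hcs_miwa_uminus_1 nat_eq_iff)

lemma hcs_int_convolution_uminus:
  "(\<Sum>j\<le>i. hcs_int t (int i - int j) * hcs (\<lambda>k. - t k) j) = (if i = 0 then 1 else 0)"
proof -
  have "(\<Sum>j\<le>i. hcs_int t (int i - int j) * hcs (\<lambda>k. - t k) j) =
      fps_nth (hcs_fps (\<lambda>k. - t k) * hcs_fps t) i"
  proof -
    have "hcs_int t (int i - int j) = hcs t (i - j)" if "j \<le> i" for j
      using that by (simp add: hcs_int_def nat_diff_distrib)
    then show ?thesis
      unfolding fps_mult_nth atLeast0AtMost hcs_eq_hcs_fps_nth by (simp add: mult.commute)
  qed
  also have "\<dots> = fps_nth 1 i"
    by (simp add: hcs_fps_mult_uminus mult.commute)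
  finally show ?thesis
    by simp
qed

lemma is_partition_nth_pos: "is_partition lam \<Longrightarrow> i < length lam \<Longrightarrow> 0 < lam ! i"
  unfolding is_partition_def by auto

lemma is_partition_nth_antimono:
  "is_partition lam \<Longrightarrow> i \<le> j \<Longrightarrow> j < length lam \<Longrightarrow> lam ! j \<le> lam ! i"
  unfolding is_partition_def by (cases "i = j") (auto simp: sorted_wrt_iff_nth_less)

lemma det_eq_0_if_row_multiple:
  fixes A :: "'a::idom mat"
  assumes A: "A \<in> carrier_mat n n" and "i < n" "j < n" "i \<noteq> j" "c \<noteq> 0"
    and rows: "\<And>l. l < n \<Longrightarrow> A $$ (i, l) = c * A $$ (j, l)"
  shows "det A = 0"
proof -
  have "row (multrow j c A) i = row (multrow j c A) j"
    using assms by (intro eq_vecI) auto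
  then have "det (multrow j c A) = 0"
    using assms by (intro det_identical_rows[of _ n i j]) auto
  then show ?thesis
    using det_multrow[OF \<open>j < n\<close> A, of c] \<open>c \<noteq> 0\<close> by simp
qed

lemma schur_miwa_1_eq_0:
  assumes "is_partition lam" "2 \<le> length lam"
  shows "schur lam (miwa (1::'a::field_char_0)) = 0"
proof -
  define M :: "'a fls mat" where "M = mat (length lam) (length lam)
    (\<lambda>(i, j). hcs_int (miwa 1) (int (lam ! i) - int i + int j))"
  have pos: "0 < lam ! 1" and le: "lam ! 1 \<le> lam ! 0"
    using assms is_partition_nth_pos is_partition_nth_antimono by auto
  have "det M = 0"
  proof (rule det_eq_0_if_row_multiple[of M "length lam" 0 1 "fls_X ^ (lam ! 0 + 1 - lam ! 1)"])
    fix l assume l: "l < length lam"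
    have "0 < length lam" and "nat (int (lam ! 1) - 1 + int l) = lam ! 1 - 1 + l" and
      "lam ! 0 + 1 - lam ! 1 + (lam ! 1 - 1 + l) = lam ! 0 + l"
      using assms(2) pos le by auto
    then show "M $$ (0, l) = fls_X ^ (lam ! 0 + 1 - lam ! 1) * M $$ (1, l)"
      using l assms(2) by (simp add: M_def hcs_int_miwa_1 nat_add_distrib flip: power_add)
  qed (use assms(2) in \<open>auto simp: M_def\<close>)
  then show ?thesis
    by (simp add: schur_eq_det M_def)
qed

lemma schur_miwa_uminus_1_eq_0:
  assumes "lam \<noteq> []" "2 \<le> lam ! 0"
  shows "schur lam (miwa (-1::'a::field_char_0)) = 0"
proof -
  have first_row_0:
    "(\<Prod>i<length lam. hcs_int (miwa (-1::'a)) (int (lam ! i) - int i + int (p i))) = 0" for p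
    by (rule prod_zero) (use assms in \<open>auto simp: hcs_int_miwa_uminus_1 intro!: bexI[of _ 0]\<close>)
  show ?thesis
    unfolding schur_def ldet_def by (simp only: first_row_0 mult_zero_right sum.neutral_const)
qed

lemma schur_column_miwa_uminus_1:
  "schur (replicate n 1) (miwa (-1::'a::field_char_0)) = (- fls_X) ^ n"
proof -
  define A where
    "A = mat n n (\<lambda>(i, j). hcs_int (miwa (-1::'a)) (int (replicate n 1 ! i) - int i + int j))"
  have "det A = prod_list (diag_mat A)"
    by (rule det_lower_triangular[of n]) (auto simp: A_def hcs_int_miwa_uminus_1)
  also have "diag_mat A = replicate n (- fls_X)"
    by (rule nth_equalityI) (auto simp: diag_mat_def A_def hcs_int_miwa_uminus_1)
  finally show ?thesis
    by (simp add: schur_eq_det A_def)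
qed

lemma schur_column: "schur (replicate n 1) t = (-1) ^ n * hcs (\<lambda>k. - t k) n"
proof -
  define N where "N = Suc n"
  define A where "A = mat N N (\<lambda>(i, j). hcs_int t (int i - int j))"
  define x where "x = vec N (hcs (\<lambda>k. - t k))"
  define B where "B = replace_col A (unit_vec N 0) n"
  have A: "A \<in> carrier_mat N N" and x: "x \<in> carrier_vec N" and B: "B \<in> carrier_mat N N"
    by (simp_all add: A_def x_def B_def replace_col_def)
  have "A *\<^sub>v x = unit_vec N 0"
  proof (rule eq_vecI)
    fix i assume "i < dim_vec (unit_vec N 0 :: 'a vec)"
    then have i: "i < N"
      by simp
    have "(A *\<^sub>v x) $ i = (\<Sum>j<N. hcs_int t (int i - int j) * hcs (\<lambda>k. - t k) j)"
      using i by (simp add: A_def x_def mult_mat_vec_def scalar_prod_def atLeast0LessThan)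
    also have "\<dots> = (\<Sum>j\<le>i. hcs_int t (int i - int j) * hcs (\<lambda>k. - t k) j)"
      by (rule sum.mono_neutral_right) (use i in \<open>auto simp: hcs_int_def\<close>)
    also have "\<dots> = unit_vec N 0 $ i"
      using i by (simp add: hcs_int_convolution_uminus)
    finally show "(A *\<^sub>v x) $ i = unit_vec N 0 $ i" .
  qed (simp add: A_def)
  moreover have "det A = 1"
  proof -
    have "det A = prod_list (diag_mat A)"
      by (rule det_lower_triangular[OF _ A]) (auto simp: A_def hcs_int_def)
    also have "diag_mat A = replicate N 1"
      by (rule nth_equalityI) (auto simp: diag_mat_def A_def hcs_int_def)
    finally show ?thesis
      by simp
  qed
  (* Cramer's rule for the unitriangular system (h_(i-j)(t)) x = e_0, which is solved by
     x_j = h_j(-t); the minor left by the Laplace expansion is the Jacobi-Trudi matrix of (1^n). *)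
  ultimately have "hcs (\<lambda>k. - t k) n = det B"
    using cramer_lemma_mat[OF A x, of n] by (simp add: B_def x_def N_def)
  also have "\<dots> = (\<Sum>i<N. B $$ (i, n) * cofactor B i n)"
    by (rule laplace_expansion_column[OF B]) (simp add: N_def)
  also have "\<dots> = (\<Sum>i\<in>{0}. B $$ (i, n) * cofactor B i n)"
    by (rule sum.mono_neutral_right) (auto simp: B_def replace_col_def A_def N_def)
  also have "\<dots> = (-1) ^ n * det (mat_delete B 0 n)"
    by (simp add: B_def replace_col_def A_def N_def cofactor_def)
  also have "mat_delete B 0 n =
      transpose_mat (mat n n (\<lambda>(i, j). hcs_int t (int (replicate n 1 ! i) - int i + int j)))"
    by (rule eq_matI) (auto simp: mat_delete_def B_def replace_col_def A_def N_def algebra_simps)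
  also have "det \<dots> = schur (replicate n 1) t"
    by (subst det_transpose[of _ n]) (simp_all add: schur_eq_det)
  finally have "hcs (\<lambda>k. - t k) n = (-1) ^ n * schur (replicate n 1) t" .
  then show ?thesis
    by (simp flip: power_mult_distrib)
qed

definition row_partition :: "nat \<Rightarrow> nat list" where
  "row_partition m = (if m = 0 then [] else [m])"

lemma is_partition_row_partition: "is_partition (row_partition m)"
  by (simp add: row_partition_def is_partition_def)

lemma sum_list_row_partition [simp]: "sum_list (row_partition m) = m"
  by (simp add: row_partition_def)

lemma schur_row_partition: "schur (row_partition m) t = hcs t m"
  by (simp add: row_partition_def schur_def ldet_def hcs_int_def lessThan_Suc)

lemma r_lam_row_partition: "r_lam G beta (row_partition m) = (\<Prod>j<m. G (of_nat j * beta))"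
  by (simp add: row_partition_def r_lam_def)

lemma is_partition_eq_row_partition:
  "is_partition lam \<Longrightarrow> length lam \<le> 1 \<Longrightarrow> lam = row_partition (sum_list lam)"
  by (cases lam) (auto simp: row_partition_def is_partition_def)

lemma is_partition_replicate_1: "is_partition (replicate m 1)"
  by (simp add: is_partition_def sorted_wrt_iff_nth_less)

lemma r_lam_replicate_1: "r_lam G beta (replicate m 1) = (\<Prod>i<m. G (- (of_nat i * beta)))"
  by (simp add: r_lam_def)

lemma is_partition_eq_replicate_1:
  assumes "is_partition lam" and "lam \<noteq> [] \<Longrightarrow> lam ! 0 < 2"
  shows "lam = replicate (sum_list lam) 1"
proof -
  have "lam ! i = 1" if i: "i < length lam" for i
  proof -
    have "0 < lam ! i" and "lam ! i \<le> lam ! 0"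
      using is_partition_nth_pos[OF assms(1) i] is_partition_nth_antimono[OF assms(1) _ i] by auto
    moreover have "lam ! 0 < 2"
      using i by (intro assms(2)) auto
    ultimately show ?thesis
      by linarith
  qed
  then have lam: "lam = replicate (length lam) 1"
    by (simp add: list_eq_iff_nth_eq)
  show ?thesis
    by (subst (1 2) lam) (simp add: sum_list_replicate)
qed

lemma sum_filter_nonzero_single:
  assumes "\<And>x. x \<in> A \<Longrightarrow> x \<noteq> a \<Longrightarrow> f x = 0"
  shows "(\<Sum>x\<in>{x\<in>A. f x \<noteq> 0}. f x) = (if a \<in> A then f a else 0)"
proof -
  have "{x\<in>A. f x \<noteq> 0} = {} \<or> {x\<in>A. f x \<noteq> 0} = {a}"
    using assms by auto
  then show ?thesis
    by auto
qed

lemma fls_formal_sum_nth_eqI: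
  assumes "\<And>n. (\<Sum>i\<in>{i\<in>A. fls_nth (F i) n \<noteq> 0}. fls_nth (F i) n) = c n"
    and "\<And>n. n < N \<Longrightarrow> c n = 0"
  shows "fls_nth (fls_formal_sum F A) n = c n"
  unfolding fls_formal_sum_def assms(1) by (rule nth_Abs_fls_lower_bound) (use assms(2) in auto)

lemma Psi0_nth_single_shape:
  assumes partition: "\<And>m. is_partition (p m)" and size: "\<And>m. sum_list (p m) = m"
    and shape_value: "\<And>m. schur (p m) (miwa sigma) = (fls_const sigma * fls_X) ^ m"
    and other_shapes:
      "\<And>lam. is_partition lam \<Longrightarrow> lam \<noteq> p (sum_list lam) \<Longrightarrow> schur lam (miwa sigma) = 0"
  shows "fls_nth (Psi0 G beta gamma s sigma) n =
    (if 0 \<le> n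
     then gamma ^ nat n * r_lam G beta (p (nat n)) * schur (p (nat n)) (\<lambda>i. s i / beta) * sigma ^ nat n
     else 0)"
proof -
  define C where
    "C = (\<lambda>lam. gamma ^ sum_list lam * r_lam G beta lam * schur lam (\<lambda>i. s i / beta))"
  define F where "F = (\<lambda>lam. fls_const (C lam) * schur lam (miwa sigma))"
  have F_nth: "fls_nth (F lam) n =
      (if n = int (sum_list lam) \<and> lam = p (sum_list lam) then C lam * sigma ^ sum_list lam else 0)"
    if "is_partition lam" for lam n
  proof (cases "lam = p (sum_list lam)")
    case True
    then have "F lam = fls_const (C lam * sigma ^ sum_list lam) * fls_X ^ sum_list lam"
      using shape_value[of "sum_list lam"]
      by (simp add: F_def power_mult_distrib flip: fls_const_power)
    then show ?thesis
      by (simp add: True[symmetric])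
  qed (simp add: F_def other_shapes that)
  have "fls_nth (F lam) n = 0" if "is_partition lam" "lam \<noteq> p (nat n)" for lam n
  proof -
    have "\<not> (n = int (sum_list lam) \<and> lam = p (sum_list lam))"
      using that(2) by (metis nat_int)
    then show ?thesis
      using F_nth[OF that(1), of n] by (simp only: if_not_P if_False)
  qed
  then have "(\<Sum>lam\<in>{lam\<in>{lam. is_partition lam}. fls_nth (F lam) n \<noteq> 0}. fls_nth (F lam) n) =
      fls_nth (F (p (nat n))) n" for n
    using sum_filter_nonzero_single[where A = "{lam. is_partition lam}" and a = "p (nat n)"
        and f = "\<lambda>lam. fls_nth (F lam) n"] partition
    by simp
  also have "fls_nth (F (p (nat n))) n = (if 0 \<le> n then C (p (nat n)) * sigma ^ nat n else 0)" for n
    using F_nth[OF partition, of "nat n" n] by (simp add: size)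
  finally have "fls_nth (fls_formal_sum F {lam. is_partition lam}) n =
      (if 0 \<le> n then C (p (nat n)) * sigma ^ nat n else 0)"
    by (rule fls_formal_sum_nth_eqI[where N = 0]) simp
  then show ?thesis
    unfolding Psi0_def F_def C_def by (simp add: size)
qed

lemma rho_of_nat: "rho G beta gamma (int m) = gamma ^ m * (\<Prod>i=1..m. G (of_nat i * beta))"
  by (simp add: rho_def)

lemma rho_uminus_of_nat:
  "rho G beta gamma (- int m) = inverse (gamma ^ m * (\<Prod>i<m. G (- (of_nat i * beta))))"
  by (cases "m = 0") (simp_all add: rho_def prod_inversef[symmetric] comp_def)

lemma rho_recurrence:
  assumes "gamma \<noteq> 0" and "\<And>m::int. G (of_int m * beta) \<noteq> 0"
  shows "rho G beta gamma m = gamma * G (of_int m * beta) * rho G beta gamma (m - 1)"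
proof (cases "0 < m")
  case True
  define k where "k = nat (m - 1)"
  have m: "m = int (Suc k)"
    using True by (simp add: k_def)
  have "rho G beta gamma (int (Suc k)) = gamma ^ Suc k * (\<Prod>i=1..Suc k. G (of_nat i * beta))"
    by (rule rho_of_nat)
  also have "\<dots> =
      gamma * G (of_nat (Suc k) * beta) * (gamma ^ k * (\<Prod>i=1..k. G (of_nat i * beta)))"
    by (simp add: prod.nat_ivl_Suc')
  also have "\<dots> = gamma * G (of_int m * beta) * rho G beta gamma (m - 1)"
    using m rho_of_nat[of G beta gamma k] by simp
  finally show ?thesis
    using m by simp
next
  case False
  define k where "k = nat (- m)"
  have m: "m = - int k"
    using False by (simp add: k_def)
  define w where "w = gamma * G (of_int m * beta)"
  define Q where "Q = gamma ^ k * (\<Prod>i<k. G (- (of_nat i * beta)))"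
  have "w \<noteq> 0"
    using assms by (simp add: w_def)
  have "rho G beta gamma m = inverse Q"
    unfolding m Q_def by (rule rho_uminus_of_nat)
  moreover have "rho G beta gamma (m - 1) = inverse (w * Q)"
  proof -
    have "m - 1 = - int (Suc k)"
      using m by simp
    then have "rho G beta gamma (m - 1) =
        inverse (gamma ^ Suc k * (\<Prod>i<Suc k. G (- (of_nat i * beta))))"
      by (simp only: rho_uminus_of_nat)
    also have "\<dots> = inverse (w * Q)"
      using m by (simp add: w_def Q_def mult_ac)
    finally show ?thesis .
  qed
  ultimately show ?thesis
    unfolding w_def[symmetric] using \<open>w \<noteq> 0\<close> by (simp add: mult.assoc[symmetric])
qed

lemma gamma_mult_rho_pred:
  assumes "G 0 = 1" and "gamma \<noteq> 0"
  shows "gamma * rho G beta gamma (int m - 1) = gamma ^ m * (\<Prod>j<m. G (of_nat j * beta))"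
proof (cases m)
  case 0
  then show ?thesis
    using rho_uminus_of_nat[of G beta gamma 1] assms by simp
next
  case (Suc k)
  have "gamma * rho G beta gamma (int m - 1) =
      gamma * (gamma ^ k * (\<Prod>i=1..k. G (of_nat i * beta)))"
    using Suc by (simp add: rho_of_nat)
  also have "(\<Prod>i=1..k. G (of_nat i * beta)) = (\<Prod>j<k. G (of_nat (Suc j) * beta))"
    by (simp only: One_nat_def prod.atLeast1_atMost_eq)
  also have "gamma * (gamma ^ k * \<dots>) = gamma ^ m * (\<Prod>j<m. G (of_nat j * beta))"
    using Suc assms(1) by (simp only: prod.lessThan_Suc_shift) simp
  finally show ?thesis .
qed

lemma Psi0_plus_nth:
  assumes "G 0 = 1" and "gamma \<noteq> 0"
  shows "fls_nth (Psi0 G beta gamma s 1) n =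
    (if 0 \<le> n then hcs (\<lambda>i. s i / beta) (nat n) * (gamma * rho G beta gamma (n - 1)) else 0)"
proof -
  have "fls_nth (Psi0 G beta gamma s 1) n =
    (if 0 \<le> n then gamma ^ nat n * r_lam G beta (row_partition (nat n)) *
       schur (row_partition (nat n)) (\<lambda>i. s i / beta) * 1 ^ nat n else 0)"
  proof (rule Psi0_nth_single_shape)
    show "schur (row_partition m) (miwa 1) = (fls_const 1 * fls_X) ^ m" for m
      by (simp add: schur_row_partition hcs_miwa_1)
    show "schur lam (miwa 1) = 0"
      if "is_partition lam" "lam \<noteq> row_partition (sum_list lam)" for lam
    proof (rule schur_miwa_1_eq_0)
      show "2 \<le> length lam"
        using that is_partition_eq_row_partition by force
    qed (fact that)
  qed (simp_all add: is_partition_row_partition)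
  moreover have "gamma ^ m * r_lam G beta (row_partition m) *
      schur (row_partition m) (\<lambda>i. s i / beta) * 1 ^ m =
      hcs (\<lambda>i. s i / beta) m * (gamma * rho G beta gamma (int m - 1))" for m
    using gamma_mult_rho_pred[of G gamma beta m, OF assms]
    by (simp add: r_lam_row_partition schur_row_partition)
  ultimately show ?thesis
    by (cases "0 \<le> n") (auto simp: nonneg_int_cases)
qed

lemma Psi0_minus_nth:
  "fls_nth (Psi0 G beta gamma s (-1)) n =
    (if 0 \<le> n then hcs (\<lambda>i. - (s i / beta)) (nat n) * inverse (rho G beta gamma (- n)) else 0)"
proof -
  have "fls_nth (Psi0 G beta gamma s (-1)) n =
    (if 0 \<le> n then gamma ^ nat n * r_lam G beta (replicate (nat n) 1) *
       schur (replicate (nat n) 1) (\<lambda>i. s i / beta) * (-1) ^ nat n else 0)"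
  proof (rule Psi0_nth_single_shape)
    show "schur (replicate m 1) (miwa (-1)) = (fls_const (-1) * fls_X) ^ m" for m
      using schur_column_miwa_uminus_1[of m] by simp
    show "schur lam (miwa (-1)) = 0"
      if "is_partition lam" "lam \<noteq> replicate (sum_list lam) 1" for lam
    proof (rule schur_miwa_uminus_1_eq_0)
      show "lam \<noteq> []" and "2 \<le> lam ! 0"
        using that is_partition_eq_replicate_1 by force+
    qed
  qed (rule is_partition_replicate_1, simp add: sum_list_replicate)
  moreover have "gamma ^ m * r_lam G beta (replicate m 1) *
      schur (replicate m 1) (\<lambda>i. s i / beta) * (-1) ^ m =
      hcs (\<lambda>i. - (s i / beta)) m * inverse (rho G beta gamma (- int m))" for m
    unfolding r_lam_replicate_1 schur_column rho_uminus_of_nat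
    by (simp add: mult_ac flip: power_mult_distrib)
  ultimately show ?thesis
    by (cases "0 \<le> n") (auto simp: nonneg_int_cases)
qed

lemma Rop_nth:
  "fls_nth (Rop G beta gamma sigma f) n = gamma * G (sigma * beta * of_int (n - 1)) * fls_nth f (n - 1)"
proof -
  obtain N where "\<forall>n<N. fls_nth f n = 0"
    by (rule fls_nth_vanishes_belowE)
  then show ?thesis
    unfolding Rop_def by (intro nth_Abs_fls_lower_bound[of "N + 1"]) auto
qed

lemma Rinv_nth:
  "fls_nth (Rinv G beta gamma sigma f) n = fls_nth f (n + 1) / (gamma * G (sigma * beta * of_int n))"
proof -
  obtain N where "\<forall>n<N. fls_nth f n = 0"
    by (rule fls_nth_vanishes_belowE)
  then show ?thesis
    unfolding Rinv_def by (intro nth_Abs_fls_lower_bound[of "N - 1"]) auto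
qed

lemma Rpow_nth:
  assumes weight_nz: "\<And>n. gamma * G (sigma * beta * of_int n) \<noteq> 0"
    and f_nth: "\<And>n. fls_nth f n = (if 0 \<le> n then a (nat n) * b n else 0)"
    and b_succ: "\<And>n. b (n + 1) = gamma * G (sigma * beta * of_int n) * b n"
  shows "fls_nth (Rpow G beta gamma sigma k f) n = (if k \<le> n then a (nat (n - k)) * b n else 0)"
proof -
  define F where "F = (\<lambda>k n. if k \<le> n then a (nat (n - k)) * b n else 0)"
  have Rop_F: "fls_nth (Rop G beta gamma sigma g) n = F (k + 1) n"
    if "\<And>n. fls_nth g n = F k n" for g k n
    using that b_succ[of "n - 1"] by (simp add: Rop_nth F_def algebra_simps)
  have Rinv_F: "fls_nth (Rinv G beta gamma sigma g) n = F k n"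
    if "\<And>n. fls_nth g n = F (k + 1) n" for g k n
    using that b_succ[of n] weight_nz[of n] by (simp add: Rinv_nth F_def algebra_simps)
  have "fls_nth ((Rop G beta gamma sigma ^^ m) f) n = F (int m) n" for m n
  proof (induction m arbitrary: n)
    case 0
    then show ?case
      by (simp add: f_nth F_def)
  next
    case (Suc m)
    then show ?case
      using Rop_F[of "(Rop G beta gamma sigma ^^ m) f" "int m"] by (simp add: add.commute)
  qed
  moreover have "fls_nth ((Rinv G beta gamma sigma ^^ m) f) n = F (- int m) n" for m n
  proof (induction m arbitrary: n)
    case 0
    then show ?case
      by (simp add: f_nth F_def)
  next
    case (Suc m)
    then show ?case
      using Rinv_F[of "(Rinv G beta gamma sigma ^^ m) f" "- int (Suc m)"] by simp
  qed
  ultimately show ?thesis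
    by (simp add: Rpow_def F_def)
qed

lemma Rpow_Psi0_plus_nth:
  assumes "G 0 = 1" and "\<And>m::int. G (of_int m * beta) \<noteq> 0" and "gamma \<noteq> 0"
  shows "fls_nth (Rpow G beta gamma 1 k (Psi0 G beta gamma s 1)) n =
    (if k \<le> n then gamma * hcs (\<lambda>i. s i / beta) (nat (n - k)) * rho G beta gamma (n - 1) else 0)"
proof -
  have "fls_nth (Rpow G beta gamma 1 k (Psi0 G beta gamma s 1)) n =
    (if k \<le> n then hcs (\<lambda>i. s i / beta) (nat (n - k)) * (gamma * rho G beta gamma (n - 1)) else 0)"
  proof (rule Rpow_nth[where a = "hcs (\<lambda>i. s i / beta)" and b = "\<lambda>n. gamma * rho G beta gamma (n - 1)"])
    show "gamma * G (1 * beta * of_int n) \<noteq> 0" for n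
      using assms(2,3) by (simp add: mult.commute)
    show "fls_nth (Psi0 G beta gamma s 1) n =
        (if 0 \<le> n then hcs (\<lambda>i. s i / beta) (nat n) * (gamma * rho G beta gamma (n - 1)) else 0)" for n
      by (rule Psi0_plus_nth[where G = G and gamma = gamma, OF assms(1,3)])
    show "gamma * rho G beta gamma (n + 1 - 1) =
        gamma * G (1 * beta * of_int n) * (gamma * rho G beta gamma (n - 1))" for n
      using rho_recurrence[where G = G and beta = beta and gamma = gamma, OF assms(3,2), of n]
      by (simp add: mult_ac)
  qed
  then show ?thesis
    by (simp add: mult_ac)
qed

lemma Rpow_Psi0_minus_nth:
  assumes "\<And>m::int. G (of_int m * beta) \<noteq> 0" and "gamma \<noteq> 0"
  shows "fls_nth (Rpow G beta gamma (-1) k (Psi0 G beta gamma s (-1))) n =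
    (if k \<le> n then hcs (\<lambda>i. - (s i / beta)) (nat (n - k)) * inverse (rho G beta gamma (- n)) else 0)"
proof (rule Rpow_nth[where a = "hcs (\<lambda>i. - (s i / beta))" and b = "\<lambda>n. inverse (rho G beta gamma (- n))"])
  show weight_nz: "gamma * G (- 1 * beta * of_int n) \<noteq> 0" for n
    using assms(1)[of "- n"] assms(2) by (simp add: mult.commute)
  show "fls_nth (Psi0 G beta gamma s (-1)) n =
      (if 0 \<le> n then hcs (\<lambda>i. - (s i / beta)) (nat n) * inverse (rho G beta gamma (- n)) else 0)" for n
    by (rule Psi0_minus_nth)
  show "inverse (rho G beta gamma (- (n + 1))) =
      gamma * G (- 1 * beta * of_int n) * inverse (rho G beta gamma (- n))" for n
    using rho_recurrence[where G = G and beta = beta and gamma = gamma, OF assms(2,1), of "- n"]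
      weight_nz[of n]
    by (simp add: mult_ac)
qed

theorem proposition5p8:
  fixes G :: "'a::field_char_0 \<Rightarrow> 'a" and beta gamma :: 'a and s :: "nat \<Rightarrow> 'a" and k :: int
  assumes "G 0 = 1"
    and "\<And>m::int. G (of_int m * beta) \<noteq> 0"
    and "beta \<noteq> 0" and "gamma \<noteq> 0"
  shows "(\<forall>n::int. fls_nth (Rpow G beta gamma 1 k (Psi0 G beta gamma s 1)) n =
           (if k \<le> n then gamma * hcs (\<lambda>i. s i / beta) (nat (n - k)) * rho G beta gamma (n - 1)
            else 0)) \<and>
         (\<forall>n::int. fls_nth (Rpow G beta gamma (-1) k (Psi0 G beta gamma s (-1))) n =
           (if k \<le> n then hcs (\<lambda>i. - (s i / beta)) (nat (n - k)) * inverse (rho G beta gamma (- n))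
            else 0))"
proof -
  show ?thesis
    using Rpow_Psi0_plus_nth[where G = G, OF assms(1,2,4)] Rpow_Psi0_minus_nth[where G = G, OF assms(2,4)]
    by blast
qed

end
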